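(* Let $\tau=(12)(34)(56)\in S_7$ acting on $D_7$ (variables $1,\dots,7$). Then $$\phi_9\big((12)(34)(56)(78)\big)=\#\{(a,b,d): a,d\in\Phi_7(\tau),\ b\in D_7,\ a\le b,\ b\vee \tau b\le d\},$$ where $\le$ and $\vee$ are the pointwise order and pointwise maximum of functions.
   Context: $B=\{0,1\}$ with $0\le1$; $B^n$ is ordered componentwise; $D_n$ is the set of monotone functions $B^n\to B$, ordered pointwise ($f\le g$ iff $f(x)\le g(x)$ for all $x$). $S_n$ acts on $D_n$ by $(\pi f)(x_1,\dots,x_n)=f(x_{\pi(1)},\dots,x_{\pi(n)})$. For $\pi\in S_n$, $\Phi_n(\pi)=\{f\in D_n:\pi f=f\}$ and $\phi_n(\pi)=|\Phi_n(\pi)|$. Here $(12)(34)(56)(78)\in S_9$ fixes variable $9$. *)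

theory Defs
  imports "HOL-Combinatorics.Combinatorics"
begin

text \<open>Points of B^n are boolean lists of length n (entry i-1 is x_i; False < True).
  A function B^n -> B is a map on bool lists which is False off lists of length n
  (extensional), so that equality and the pointwise order/sup of HOL functions
  agree with those of functions on B^n.\<close>

definition cube :: "nat \<Rightarrow> bool list set" where
  "cube n = {xs. length xs = n}"

definition leq_vec :: "bool list \<Rightarrow> bool list \<Rightarrow> bool" where
  "leq_vec xs ys \<longleftrightarrow> list_all2 (\<le>) xs ys"

definition D :: "nat \<Rightarrow> (bool list \<Rightarrow> bool) set" where
  "D n = {f. (\<forall>xs. xs \<notin> cube n \<longrightarrow> f xs = False) \<and>
             (\<forall>xs\<in>cube n. \<forall>ys\<in>cube n. leq_vec xs ys \<longrightarrow> f xs \<le> f ys)}"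

definition act :: "nat \<Rightarrow> (nat \<Rightarrow> nat) \<Rightarrow> (bool list \<Rightarrow> bool) \<Rightarrow> (bool list \<Rightarrow> bool)" where
  "act n \<pi> f = (\<lambda>xs. if length xs = n
                        then f (map (\<lambda>i. xs ! (\<pi> (Suc i) - 1)) [0..<n])
                        else False)"

definition Phi :: "nat \<Rightarrow> (nat \<Rightarrow> nat) \<Rightarrow> (bool list \<Rightarrow> bool) set" where
  "Phi n \<pi> = {f \<in> D n. act n \<pi> f = f}"

definition phi :: "nat \<Rightarrow> (nat \<Rightarrow> nat) \<Rightarrow> nat" where
  "phi n \<pi> = card (Phi n \<pi>)"

end

theory Submission
  imports Defs
begin

text \<open>Splitting off the variables 7 and 8, a function f on B^9 is the same as a monotone
  family f_pq of functions on B^7 indexed by (p, q) \<in> B^2, where f_pq fixes x_7 = p and x_8 = q.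
  Since \<sigma> acts as \<tau> on the other variables and swaps x_7 and x_8, f is \<sigma>-invariant iff
  \<tau> f_pq = f_qp. So f_00 and f_11 are \<tau>-invariant and f_10 = \<tau> f_01 is determined by f_01,
  and monotonicity of the family reduces to f_00 \<le> f_01 and f_01 \<squnion> \<tau> f_01 \<le> f_11
  (f_00 \<le> \<tau> f_01 follows by applying \<tau>). Hence f \<mapsto> (f_00, f_01, f_11) is a bijection.\<close>

lemma leq_vec_length: "leq_vec xs ys \<Longrightarrow> length ys = length xs"
  by (simp add: leq_vec_def list_all2_lengthD)

lemma leq_vec_refl: "leq_vec xs xs"
  by (simp add: leq_vec_def list_all2_refl)

lemma leq_vec_insert:
  "leq_vec xs ys \<Longrightarrow> p \<le> p' \<Longrightarrow> q \<le> q' \<Longrightarrow>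
   leq_vec (take k xs @ p # q # drop k xs) (take k ys @ p' # q' # drop k ys)"
  by (simp add: leq_vec_def list_all2_appendI list_all2_takeI list_all2_dropI)

lemma in_D_False: "f \<in> D n \<Longrightarrow> length xs \<noteq> n \<Longrightarrow> \<not> f xs"
  by (simp add: D_def cube_def)

lemma in_D_mono:
  assumes f: "f \<in> D n" and le: "leq_vec xs ys" and "f xs"
  shows "f ys"
proof -
  have "length xs = n" using in_D_False[OF f] \<open>f xs\<close> by blast
  moreover have "length ys = n" using leq_vec_length[OF le] calculation by simp
  ultimately show ?thesis using assms by (simp add: D_def cube_def le_bool_def)
qed

lemma in_DI:
  assumes "\<And>xs. length xs \<noteq> n \<Longrightarrow> \<not> f xs"
    and "\<And>xs ys. length xs = n \<Longrightarrow> leq_vec xs ys \<Longrightarrow> f xs \<Longrightarrow> f ys"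
  shows "f \<in> D n"
  using assms by (auto simp: D_def cube_def)

lemma act_mono: "f \<le> g \<Longrightarrow> act n \<pi> f \<le> act n \<pi> g"
  by (simp add: act_def le_fun_def)

lemma act_in_D:
  assumes "\<And>i. i \<in> {1..n} \<Longrightarrow> \<pi> i \<in> {1..n}" and "f \<in> D n"
  shows "act n \<pi> f \<in> D n"
proof (rule in_DI)
  fix xs ys assume "length xs = n" "leq_vec xs ys" "act n \<pi> f xs"
  moreover have "leq_vec (map (\<lambda>i. xs ! (\<pi> (Suc i) - 1)) [0..<n])
                         (map (\<lambda>i. ys ! (\<pi> (Suc i) - 1)) [0..<n])"
  proof -
    have "\<pi> (Suc i) - 1 < n" if "i < n" for i using assms(1)[of "Suc i"] that by auto
    then show ?thesis using \<open>leq_vec xs ys\<close> \<open>length xs = n\<close>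
      by (auto simp: leq_vec_def list_all2_conv_all_nth)
  qed
  ultimately show "act n \<pi> f ys" using assms(2) in_D_mono
    by (auto simp: act_def leq_vec_def dest: list_all2_lengthD)
qed (simp add: act_def)

text \<open>List positions k and k + 1 hold the variables x_(k+1) and x_(k+2).\<close>

definition fiber :: "nat \<Rightarrow> nat \<Rightarrow> bool \<Rightarrow> bool \<Rightarrow> (bool list \<Rightarrow> bool) \<Rightarrow> bool list \<Rightarrow> bool" where
  "fiber k n p q f ys \<longleftrightarrow> length ys = n \<and> f (take k ys @ p # q # drop k ys)"

definition glue :: "nat \<Rightarrow> nat \<Rightarrow> (bool \<Rightarrow> bool \<Rightarrow> bool list \<Rightarrow> bool) \<Rightarrow> bool list \<Rightarrow> bool" where
  "glue k n g xs \<longleftrightarrow>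
     length xs = n + 2 \<and> g (xs ! k) (xs ! Suc k) (take k xs @ drop (k + 2) xs)"

lemma fiber_glue:
  assumes "k \<le> n" and "\<And>ys. length ys \<noteq> n \<Longrightarrow> \<not> g p q ys"
  shows "fiber k n p q (glue k n g) = g p q"
proof
  fix ys show "fiber k n p q (glue k n g) ys = g p q ys"
    using assms by (cases "length ys = n") (auto simp: fiber_def glue_def nth_append min_def)
qed

lemma glue_fiber:
  assumes "k \<le> n" and "\<And>xs. length xs \<noteq> n + 2 \<Longrightarrow> \<not> f xs"
  shows "glue k n (\<lambda>p q. fiber k n p q f) = f"
proof
  fix xs show "glue k n (\<lambda>p q. fiber k n p q f) xs = f xs"
  proof (cases "length xs = n + 2")
    case True
    then have "xs ! k # xs ! Suc k # drop (k + 2) xs = drop k xs"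
      using assms(1) by (simp add: Cons_nth_drop_Suc)
    then have "take k xs @ xs ! k # xs ! Suc k # drop (k + 2) xs = xs" by simp
    with True assms(1) show ?thesis by (simp add: glue_def fiber_def min_def)
  qed (simp add: glue_def assms(2))
qed

lemma fiber_in_D:
  assumes f: "f \<in> D (n + 2)"
  shows "fiber k n p q f \<in> D n"
proof (rule in_DI)
  fix xs ys assume le: "leq_vec xs ys" and fx: "fiber k n p q f xs"
  have "f (take k ys @ p # q # drop k ys)"
    using in_D_mono[OF f leq_vec_insert[OF le order_refl order_refl]] fx by (simp add: fiber_def)
  with leq_vec_length[OF le] fx show "fiber k n p q f ys" by (simp add: fiber_def)
qed (simp add: fiber_def)

lemma fiber_mono:
  assumes f: "f \<in> D (n + 2)" and "p \<le> p'" "q \<le> q'"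
  shows "fiber k n p q f \<le> fiber k n p' q' f"
proof (rule le_funI)
  fix ys
  show "fiber k n p q f ys \<le> fiber k n p' q' f ys"
    using in_D_mono[OF f leq_vec_insert[OF leq_vec_refl assms(2,3)]]
    by (simp add: fiber_def le_bool_def)
qed

lemma glue_in_D:
  assumes "k \<le> n" and "\<And>p q. g p q \<in> D n"
    and "\<And>p q p' q'. p \<le> p' \<Longrightarrow> q \<le> q' \<Longrightarrow> g p q \<le> g p' q'"
  shows "glue k n g \<in> D (n + 2)"
proof (rule in_DI)
  fix xs ys assume len: "length xs = n + 2" and le: "leq_vec xs ys" and gx: "glue k n g xs"
  have "xs ! i \<le> ys ! i" if "i < n + 2" for i
    using le len that by (simp add: leq_vec_def list_all2_conv_all_nth)
  then have "g (xs ! k) (xs ! Suc k) \<le> g (ys ! k) (ys ! Suc k)"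
    using assms(1,3) by simp
  moreover have "leq_vec (take k xs @ drop (k + 2) xs) (take k ys @ drop (k + 2) ys)"
    using le by (simp add: leq_vec_def list_all2_appendI list_all2_takeI list_all2_dropI)
  ultimately show "glue k n g ys"
    using gx le assms(2) in_D_mono by (fastforce simp: glue_def leq_vec_def list_all2_lengthD)
qed (simp add: glue_def)

definition tau7 :: "nat \<Rightarrow> nat" where
  "tau7 = transpose 1 2 \<circ> transpose 3 4 \<circ> transpose 5 6"

definition sigma9 :: "nat \<Rightarrow> nat" where
  "sigma9 = transpose 1 2 \<circ> transpose 3 4 \<circ> transpose 5 6 \<circ> transpose 7 8"

lemma act_tau7: "act 7 tau7 f [x0, x1, x2, x3, x4, x5, x6] = f [x1, x0, x3, x2, x5, x4, x6]"
  by (simp add: act_def tau7_def transpose_def upt_rec)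

lemma act_sigma9:
  "act 9 sigma9 f [x0, x1, x2, x3, x4, x5, x6, x7, x8] = f [x1, x0, x3, x2, x5, x4, x7, x6, x8]"
  by (simp add: act_def sigma9_def transpose_def upt_rec)

lemma tau7_maps_to: "i \<in> {1..7} \<Longrightarrow> tau7 i \<in> {1..7}"
  by (auto simp: tau7_def transpose_def)

lemma ext_length_7:
  assumes "\<And>xs. length xs \<noteq> 7 \<Longrightarrow> f xs = g xs"
    and "\<And>x0 x1 x2 x3 x4 x5 x6. f [x0, x1, x2, x3, x4, x5, x6] = g [x0, x1, x2, x3, x4, x5, x6]"
  shows "f = g"
proof
  fix xs :: "'a list"
  show "f xs = g xs"
  proof (cases "length xs = 7")
    case True
    then obtain x0 x1 x2 x3 x4 x5 x6 where "xs = [x0, x1, x2, x3, x4, x5, x6]"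
      by (auto simp: length_Suc_conv numeral_eq_Suc)
    then show ?thesis using assms(2) by simp
  qed (rule assms(1))
qed

lemma act_tau7_involutive: "f \<in> D 7 \<Longrightarrow> act 7 tau7 (act 7 tau7 f) = f"
  by (rule ext_length_7) (simp add: act_def in_D_False, simp add: act_tau7)

lemma fiber_act_swap: "act 7 tau7 (fiber 6 7 p q f) = fiber 6 7 q p (act 9 sigma9 f)"
  by (rule ext_length_7) (simp add: act_def fiber_def, simp add: act_tau7 act_sigma9 fiber_def)

lemma Phi_fiber_swap:
  "f \<in> Phi 9 sigma9 \<Longrightarrow> act 7 tau7 (fiber 6 7 p q f) = fiber 6 7 q p f"
  by (simp add: fiber_act_swap Phi_def)

definition invariant_square :: "(bool list \<Rightarrow> bool) \<Rightarrow> (bool list \<Rightarrow> bool) \<Rightarrow>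
    (bool list \<Rightarrow> bool) \<Rightarrow> bool \<Rightarrow> bool \<Rightarrow> bool list \<Rightarrow> bool" where
  "invariant_square a b d p q =
     (if p then (if q then d else act 7 tau7 b) else (if q then b else a))"

definition slices :: "(bool list \<Rightarrow> bool) \<Rightarrow>
    (bool list \<Rightarrow> bool) \<times> (bool list \<Rightarrow> bool) \<times> (bool list \<Rightarrow> bool)" where
  "slices f = (fiber 6 7 False False f, fiber 6 7 False True f, fiber 6 7 True True f)"

definition assemble :: "(bool list \<Rightarrow> bool) \<times> (bool list \<Rightarrow> bool) \<times> (bool list \<Rightarrow> bool) \<Rightarrow>
    bool list \<Rightarrow> bool" where
  "assemble t = (case t of (a, b, d) \<Rightarrow> glue 6 7 (invariant_square a b d))"

definition sandwich_triples ::
    "((bool list \<Rightarrow> bool) \<times> (bool list \<Rightarrow> bool) \<times> (bool list \<Rightarrow> bool)) set" where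
  "sandwich_triples = {(a, b, d). a \<in> Phi 7 tau7 \<and> d \<in> Phi 7 tau7 \<and> b \<in> D 7 \<and>
                                  a \<le> b \<and> sup b (act 7 tau7 b) \<le> d}"

lemma slices_in_sandwich_triples:
  assumes f: "f \<in> Phi 9 sigma9"
  shows "slices f \<in> sandwich_triples"
proof -
  have fD: "f \<in> D (7 + 2)" using f by (simp add: Phi_def)
  note swap = Phi_fiber_swap[OF f]
  have "fiber 6 7 p q f \<in> Phi 7 tau7" if "p = q" for p q
    using swap[of p q] fiber_in_D[OF fD] that by (simp add: Phi_def)
  moreover have "fiber 6 7 False True f \<le> fiber 6 7 True True f"
    and "act 7 tau7 (fiber 6 7 False True f) \<le> fiber 6 7 True True f"
    and "fiber 6 7 False False f \<le> fiber 6 7 False True f"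
    using fiber_mono[OF fD] by (simp_all add: swap)
  ultimately show ?thesis
    by (simp add: slices_def sandwich_triples_def fiber_in_D[OF fD])
qed

lemma assemble_fiber:
  assumes "(a, b, d) \<in> sandwich_triples"
  shows "fiber 6 7 p q (assemble (a, b, d)) = invariant_square a b d p q"
proof -
  have "a \<in> D 7" "b \<in> D 7" "d \<in> D 7" using assms by (auto simp: sandwich_triples_def Phi_def)
  then have "\<not> invariant_square a b d p q ys" if "length ys \<noteq> 7" for ys
    using that by (simp add: invariant_square_def act_def in_D_False)
  then show ?thesis by (simp add: assemble_def fiber_glue)
qed

lemma assemble_in_Phi:
  assumes t: "(a, b, d) \<in> sandwich_triples"
  shows "assemble (a, b, d) \<in> Phi 9 sigma9"
proof -
  have aD: "a \<in> D 7" and bD: "b \<in> D 7" and dD: "d \<in> D 7" and ab: "a \<le> b"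
    and aT: "act 7 tau7 a = a" and dT: "act 7 tau7 d = d"
    and bd: "b \<le> d" and bd': "act 7 tau7 b \<le> d"
    using t by (auto simp: sandwich_triples_def Phi_def)
  have ab': "a \<le> act 7 tau7 b" using act_mono[OF ab, of 7 tau7] aT by simp
  have mono: "invariant_square a b d p q \<le> invariant_square a b d p' q'"
    if "p \<le> p'" "q \<le> q'" for p q p' q'
    using that ab ab' bd bd' order_trans[OF ab bd]
    by (cases p; cases q; cases p'; cases q') (simp_all add: invariant_square_def)
  have "invariant_square a b d p q \<in> D 7" for p q
    using aD bD dD act_in_D[OF tau7_maps_to bD] by (simp add: invariant_square_def)
  then have inD: "assemble (a, b, d) \<in> D (7 + 2)"
    unfolding assemble_def prod.case by (intro glue_in_D mono) simp_all
  have "act 9 sigma9 (assemble (a, b, d)) =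
        glue 6 7 (\<lambda>p q. fiber 6 7 p q (act 9 sigma9 (assemble (a, b, d))))"
    by (rule glue_fiber[symmetric]) (simp_all add: act_def)
  also have "\<dots> = glue 6 7 (\<lambda>p q. act 7 tau7 (invariant_square a b d q p))"
    by (simp add: fiber_act_swap[symmetric] assemble_fiber[OF t])
  also have "(\<lambda>p q. act 7 tau7 (invariant_square a b d q p)) = invariant_square a b d"
    by (intro ext) (simp add: invariant_square_def aT dT act_tau7_involutive[OF bD])
  finally show ?thesis
    using inD by (simp add: Phi_def assemble_def)
qed

lemma assemble_slices: "f \<in> Phi 9 sigma9 \<Longrightarrow> assemble (slices f) = f"
proof -
  assume f: "f \<in> Phi 9 sigma9"
  have "invariant_square (fiber 6 7 False False f) (fiber 6 7 False True f)
          (fiber 6 7 True True f) = (\<lambda>p q. fiber 6 7 p q f)"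
    by (intro ext) (simp add: invariant_square_def Phi_fiber_swap[OF f])
  moreover have "f \<in> D (7 + 2)" using f by (simp add: Phi_def)
  ultimately show ?thesis
    by (simp add: slices_def assemble_def glue_fiber in_D_False)
qed

lemma slices_assemble: "t \<in> sandwich_triples \<Longrightarrow> slices (assemble t) = t"
  by (cases t) (simp add: slices_def assemble_fiber invariant_square_def)

theorem mainTheorem2:
  fixes \<tau> \<sigma> :: "nat \<Rightarrow> nat"
  assumes "\<tau> = transpose 1 2 \<circ> transpose 3 4 \<circ> transpose 5 6"
      and "\<sigma> = transpose 1 2 \<circ> transpose 3 4 \<circ> transpose 5 6 \<circ> transpose 7 8"
  shows "phi 9 \<sigma> = card {(a, b, d). a \<in> Phi 7 \<tau> \<and> d \<in> Phi 7 \<tau> \<and> b \<in> D 7 \<and>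
                         a \<le> b \<and> sup b (act 7 \<tau> b) \<le> d}"
proof -
  have "bij_betw slices (Phi 9 sigma9) sandwich_triples"
    by (rule bij_betw_byWitness[where f' = assemble])
      (auto simp: assemble_slices slices_assemble slices_in_sandwich_triples assemble_in_Phi)
  then show ?thesis
    using assms by (simp add: phi_def bij_betw_same_card sandwich_triples_def tau7_def sigma9_def)
qed

end
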